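(* Let $n\ge 4$ and let $\sigma=(1\,2)(n-1\,\,n)\in S_n$. Then every associative (not necessarily unital) algebra $A$ over a field satisfying the identity $x_1\cdots x_n=x_{\sigma(1)}\cdots x_{\sigma(n)}$ is eventually commutative of degree $2n-3$, but such an algebra need not be eventually commutative of any degree less than $2n-3$.
   Context: An algebra $A$ satisfies an identity $x_1\cdots x_m=x_{\tau(1)}\cdots x_{\tau(m)}$ (with $\tau\in S_m$) if $a_1\cdots a_m=a_{\tau(1)}\cdots a_{\tau(m)}$ for all $a_1,\dots,a_m\in A$. The algebra $A$ is eventually commutative of degree $k$ if it satisfies $x_1\cdots x_k=x_{\tau(1)}\cdots x_{\tau(k)}$ for every $\tau\in S_k$. *)

theory Defs
  imports "HOL-Combinatorics.Permutations" "HOL-Combinatorics.Transposition"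
begin

definition is_assoc_algebra ::
  "'a set \<Rightarrow> ('a \<Rightarrow> 'a \<Rightarrow> 'a) \<Rightarrow> 'a \<Rightarrow> ('k::field \<Rightarrow> 'a \<Rightarrow> 'a) \<Rightarrow> ('a \<Rightarrow> 'a \<Rightarrow> 'a) \<Rightarrow> bool"
where
  "is_assoc_algebra A add zero sc mul \<longleftrightarrow>
     zero \<in> A \<and>
     (\<forall>a\<in>A. \<forall>b\<in>A. add a b \<in> A \<and> mul a b \<in> A) \<and>
     (\<forall>c. \<forall>a\<in>A. sc c a \<in> A) \<and>
     (\<forall>a\<in>A. \<forall>b\<in>A. \<forall>d\<in>A. add (add a b) d = add a (add b d)) \<and>
     (\<forall>a\<in>A. \<forall>b\<in>A. add a b = add b a) \<and>
     (\<forall>a\<in>A. add zero a = a) \<and>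
     (\<forall>a\<in>A. \<exists>b\<in>A. add a b = zero) \<and>
     (\<forall>c. \<forall>a\<in>A. \<forall>b\<in>A. sc c (add a b) = add (sc c a) (sc c b)) \<and>
     (\<forall>c d. \<forall>a\<in>A. sc (c + d) a = add (sc c a) (sc d a)) \<and>
     (\<forall>c d. \<forall>a\<in>A. sc (c * d) a = sc c (sc d a)) \<and>
     (\<forall>a\<in>A. sc 1 a = a) \<and>
     (\<forall>a\<in>A. \<forall>b\<in>A. \<forall>d\<in>A. mul (mul a b) d = mul a (mul b d)) \<and>
     (\<forall>a\<in>A. \<forall>b\<in>A. \<forall>d\<in>A. mul a (add b d) = add (mul a b) (mul a d)) \<and>
     (\<forall>a\<in>A. \<forall>b\<in>A. \<forall>d\<in>A. mul (add a b) d = add (mul a d) (mul b d)) \<and>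
     (\<forall>c. \<forall>a\<in>A. \<forall>b\<in>A. sc c (mul a b) = mul (sc c a) b \<and> sc c (mul a b) = mul a (sc c b))"

fun lprod :: "('a \<Rightarrow> 'a \<Rightarrow> 'a) \<Rightarrow> 'a list \<Rightarrow> 'a" where
  "lprod mul [] = undefined"
| "lprod mul [x] = x"
| "lprod mul (x # y # ys) = mul x (lprod mul (y # ys))"

definition satisfies_identity :: "'a set \<Rightarrow> ('a \<Rightarrow> 'a \<Rightarrow> 'a) \<Rightarrow> nat \<Rightarrow> (nat \<Rightarrow> nat) \<Rightarrow> bool" where
  "satisfies_identity A mul m \<tau> \<longleftrightarrow>
     (\<forall>a. (\<forall>i\<in>{1..m}. a i \<in> A) \<longrightarrow>
        lprod mul (map a [1..<m+1]) = lprod mul (map (\<lambda>i. a (\<tau> i)) [1..<m+1]))"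

definition eventually_commutative :: "'a set \<Rightarrow> ('a \<Rightarrow> 'a \<Rightarrow> 'a) \<Rightarrow> nat \<Rightarrow> bool" where
  "eventually_commutative A mul k \<longleftrightarrow>
     (\<forall>\<tau>. \<tau> permutes {1..k} \<longrightarrow> satisfies_identity A mul k \<tau>)"

definition sigma_perm :: "nat \<Rightarrow> nat \<Rightarrow> nat" where
  "sigma_perm n = transpose 1 2 \<circ> transpose (n - 1) n"

end

theory Submission
  imports Defs "HOL-Computational_Algebra.Formal_Power_Series" "HOL-Library.Nat_Bijection"
begin

text \<open>Write the identity as a b U c d = b a U d c with U of length n - 4.  Reading
  x y U t1 t2 t3 with the last three letters grouped as t1 (t2 t3), (t3 t1) t2 and (t1 t2) t3 and
  applying the identity three times swaps x and y, so two adjacent letters commute as soon as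
  n - 1 letters follow them, and dually as soon as n - 1 letters precede them.  In a word of length
  2n - 3 this leaves only the middle pair, which one more application of the identity to a
  suitably grouped word moves out of the middle.  Since adjacent transpositions generate the
  symmetric group, the algebra is eventually commutative of degree 2n - 3.

  For sharpness let N = n - 2 and take the trivial extension of X k[[X]] by a bimodule M of
  functions \<phi> on pairs of naturals, X acting on the left by shifting the first argument and on
  the right by shifting the second, where the two actions are only required to agree when one
  argument is at least N.  In a product of n elements every module contribution is acted on from
  one side by a series of order at least N, which is why the identity holds.  But an element
  \<phi> supported near a point (a0, b0) with a0, b0 < N separates X^(a0+1) \<phi> X^b0 from
  X^a0 \<phi> X^(b0+1), which rules out every degree up to 2N = 2n - 4.\<close>

section \<open>Permutation identities\<close>

lemma satisfies_identity_comp: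
  assumes "satisfies_identity A mul k \<rho>" "satisfies_identity A mul k \<tau>" "\<rho> ` {1..k} \<subseteq> {1..k}"
  shows "satisfies_identity A mul k (\<rho> \<circ> \<tau>)"
  unfolding satisfies_identity_def
proof (intro allI impI)
  fix f assume f: "\<forall>i\<in>{1..k}. f i \<in> A"
  then have f_\<rho>: "\<forall>i\<in>{1..k}. f (\<rho> i) \<in> A"
    using assms(3) by auto
  from f have "lprod mul (map f [1..<k+1]) = lprod mul (map (\<lambda>i. f (\<rho> i)) [1..<k+1])"
    using assms(1) unfolding satisfies_identity_def by blast
  also have "\<dots> = lprod mul (map (\<lambda>i. f (\<rho> (\<tau> i))) [1..<k+1])"
    using spec[OF assms(2)[unfolded satisfies_identity_def], of "\<lambda>i. f (\<rho> i)"] f_\<rho> by simp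
  finally show "lprod mul (map f [1..<k+1]) = lprod mul (map (\<lambda>i. f ((\<rho> \<circ> \<tau>) i)) [1..<k+1])"
    by simp
qed

lemma eventually_commutative_if_adjacent_transpositions:
  assumes adj: "\<And>i. 1 \<le> i \<Longrightarrow> i < k \<Longrightarrow> satisfies_identity A mul k (transpose i (Suc i))"
  shows "eventually_commutative A mul k"
proof -
  have adj_seq: "satisfies_identity A mul k (apply_adj_transps xs)" if "set xs \<subseteq> {1..<k}" for xs
    using that
  proof (induction xs)
    case Nil
    then show ?case by (simp add: satisfies_identity_def)
  next
    case (Cons x xs)
    have "transpose x (Suc x) ` {1..k} \<subseteq> {1..k}"
      using Cons.prems by (auto simp: transpose_def)
    moreover have "satisfies_identity A mul k (transpose x (Suc x))"
      using Cons.prems by (intro adj) auto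
    moreover have "satisfies_identity A mul k (apply_adj_transps xs)"
      using Cons by simp
    ultimately have "satisfies_identity A mul k (transpose x (Suc x) \<circ> apply_adj_transps xs)"
      using satisfies_identity_comp by blast
    then show ?case
      by (simp add: comp_def)
  qed
  have transp: "satisfies_identity A mul k (transpose a b)" if "a < b" "b \<le> k" "1 \<le> a" for a b
    using adj_seq[of "adj_transp_seq a b"] that by (simp add: adj_transp_seq_correct set_adj_transp_seq)
  show ?thesis
    unfolding eventually_commutative_def
  proof (intro allI impI)
    fix \<tau> assume "\<tau> permutes {1..k}"
    then show "satisfies_identity A mul k \<tau>"
      using finite_atLeastAtMost
    proof (induction rule: permutes_induct)
      case id
      then show ?case by (simp add: satisfies_identity_def)
    next
      case (swap a b p)
      have "satisfies_identity A mul k (transpose a b)"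
        using transp[of a b] transp[of b a] swap.hyps by (cases "a < b") (auto simp: transpose_commute)
      moreover have "transpose a b ` {1..k} \<subseteq> {1..k}"
        using swap.hyps by (auto simp: transpose_def)
      ultimately show ?case
        using satisfies_identity_comp swap.IH by blast
    qed
  qed
qed

section \<open>Semigroups satisfying the identity\<close>

lemma lprod_Cons: "xs \<noteq> [] \<Longrightarrow> lprod mul (x # xs) = mul x (lprod mul xs)"
  by (cases xs) auto

locale carrier_semigroup =
  fixes A :: "'a set" and mul :: "'a \<Rightarrow> 'a \<Rightarrow> 'a"
  assumes mul_closed: "a \<in> A \<Longrightarrow> b \<in> A \<Longrightarrow> mul a b \<in> A"
    and mul_assoc: "a \<in> A \<Longrightarrow> b \<in> A \<Longrightarrow> c \<in> A \<Longrightarrow> mul (mul a b) c = mul a (mul b c)"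
begin

lemma lprod_closed: "xs \<noteq> [] \<Longrightarrow> set xs \<subseteq> A \<Longrightarrow> lprod mul xs \<in> A"
  by (induction xs rule: induct_list012) (auto intro: mul_closed)

lemma lprod_append:
  "xs \<noteq> [] \<Longrightarrow> ys \<noteq> [] \<Longrightarrow> set xs \<subseteq> A \<Longrightarrow> set ys \<subseteq> A
    \<Longrightarrow> lprod mul (xs @ ys) = mul (lprod mul xs) (lprod mul ys)"
  by (induction xs rule: induct_list012) (auto simp: lprod_Cons mul_assoc lprod_closed)

lemma lprod_append_lprod:
  assumes "M \<noteq> []" "set L \<subseteq> A" "set M \<subseteq> A" "set R \<subseteq> A"
  shows "lprod mul (L @ M @ R) = lprod mul (L @ lprod mul M # R)"
proof -
  have MR: "lprod mul (M @ R) = lprod mul (lprod mul M # R)"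
    using assms by (cases "R = []") (auto simp: lprod_append lprod_Cons)
  show ?thesis
    using assms MR lprod_closed[of M]
    by (cases "L = []") (auto simp: lprod_append[of L])
qed

lemma lprod_opposite:
  "set xs \<subseteq> A \<Longrightarrow> lprod (\<lambda>a b. mul b a) xs = lprod mul (rev xs)"
proof (induction xs rule: induct_list012)
  case (3 x y zs)
  then have "lprod mul ((rev zs @ [y]) @ [x]) = mul (lprod mul (rev zs @ [y])) x"
    by (subst lprod_append) auto
  with 3 show ?case by simp
qed simp_all

lemma opposite_carrier_semigroup: "carrier_semigroup A (\<lambda>a b. mul b a)"
  by unfold_locales (auto simp: mul_closed mul_assoc)

text \<open>Three swaps of the leading pair, each combined with a rotation of t1 t2 t3:
  the swaps compose to a transposition while the rotations cancel.\<close>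

lemma pair_swap_three_cycle:
  assumes "p \<in> A" "q \<in> A" and swap: "\<And>s t. s \<in> A \<Longrightarrow> t \<in> A \<Longrightarrow> mul p (mul s t) = mul q (mul t s)"
    and "t1 \<in> A" "t2 \<in> A" "t3 \<in> A"
  shows "mul p (mul t1 (mul t2 t3)) = mul q (mul t1 (mul t2 t3))"
proof -
  have "mul p (mul t1 (mul t2 t3)) = mul q (mul (mul t2 t3) t1)"
    using assms by (simp add: swap mul_closed)
  also have "\<dots> = mul q (mul t2 (mul t3 t1))"
    using assms by (simp add: mul_assoc)
  also have "\<dots> = mul p (mul (mul t3 t1) t2)"
    using assms by (simp add: swap mul_closed)
  also have "\<dots> = mul p (mul t3 (mul t1 t2))"
    using assms by (simp add: mul_assoc)
  also have "\<dots> = mul q (mul (mul t1 t2) t3)"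
    using assms by (simp add: swap mul_closed)
  also have "\<dots> = mul q (mul t1 (mul t2 t3))"
    using assms by (simp add: mul_assoc)
  finally show ?thesis .
qed

end

lemma upt_sigma_split: "4 \<le> n \<Longrightarrow> [1..<n+1] = 1 # 2 # [3..<n-1] @ [n-1, n]"
proof -
  assume n: "4 \<le> n"
  have "[1..<n+1] = [1..<(n-1) + 2]" using n by simp
  also have "\<dots> = [1..<n-1] @ [n-1, n]"
    using n by (subst upt_add_eq_append) (auto simp: numeral_2_eq_2 upt_conv_Cons)
  also have "[1..<n-1] = 1 # 2 # [3..<n-1]"
    using n by (simp add: upt_conv_Cons numeral_3_eq_3 del: upt.simps)
  finally show ?thesis by simp
qed

lemma map_sigma_perm:
  assumes "4 \<le> n"
  shows "map (\<lambda>i. f (sigma_perm n i)) [1..<n+1] = f 2 # f 1 # map f [3..<n-1] @ [f n, f (n-1)]"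
proof -
  have "map (\<lambda>i. f (sigma_perm n i)) [3..<n-1] = map f [3..<n-1]"
    by (rule map_cong) (auto simp: sigma_perm_def transpose_def)
  moreover have "sigma_perm n 1 = 2" "sigma_perm n 2 = 1" "sigma_perm n (n-1) = n" "sigma_perm n n = n-1"
    using assms by (auto simp: sigma_perm_def transpose_def)
  ultimately show ?thesis
    unfolding upt_sigma_split[OF assms] by simp
qed

lemma satisfies_sigma_identity_iff:
  assumes "4 \<le> n"
  shows "satisfies_identity A mul n (sigma_perm n) \<longleftrightarrow>
    (\<forall>a\<in>A. \<forall>b\<in>A. \<forall>c\<in>A. \<forall>d\<in>A. \<forall>us. set us \<subseteq> A \<and> length us = n - 4 \<longrightarrow>
      lprod mul (a # b # us @ [c, d]) = lprod mul (b # a # us @ [d, c]))"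
    (is "?sat \<longleftrightarrow> ?swap")
proof
  assume sat: ?sat
  show ?swap
  proof (intro ballI allI impI)
    fix a b c d us
    assume abcd: "a \<in> A" "b \<in> A" "c \<in> A" "d \<in> A" and us: "set us \<subseteq> A \<and> length us = n - 4"
    define xs where "xs = a # b # us @ [c, d]"
    define f where "f i = xs ! (i - 1)" for i
    have len: "length xs = n"
      using us assms by (simp add: xs_def)
    have f_upt: "map f [1..<n+1] = xs"
      using len by (intro nth_equalityI) (simp_all add: f_def del: upt.simps)
    then have "f 1 # f 2 # map f [3..<n-1] @ [f (n-1), f n] = a # b # us @ [c, d]"
      unfolding upt_sigma_split[OF assms] xs_def by simp
    then have "f 1 = a" "f 2 = b" "map f [3..<n-1] = us" "f (n-1) = c" "f n = d"
      using us by simp_all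
    moreover have "f i \<in> A" if "i \<in> {1..n}" for i
    proof -
      have "f i \<in> set xs"
        using that len unfolding f_def by (intro nth_mem) auto
      then show ?thesis
        using abcd us by (auto simp: xs_def)
    qed
    ultimately show "lprod mul (a # b # us @ [c, d]) = lprod mul (b # a # us @ [d, c])"
      using sat f_upt map_sigma_perm[OF assms, of f]
      unfolding satisfies_identity_def xs_def by metis
  qed
next
  assume swap: ?swap
  show ?sat
    unfolding satisfies_identity_def
  proof (intro allI impI)
    fix f assume f: "\<forall>i\<in>{1..n}. f i \<in> A"
    then have "lprod mul (f 1 # f 2 # map f [3..<n-1] @ [f (n-1), f n])
        = lprod mul (f 2 # f 1 # map f [3..<n-1] @ [f n, f (n-1)])"
      using assms by (intro swap[rule_format]) auto
    then show "lprod mul (map f [1..<n+1]) = lprod mul (map (\<lambda>i. f (sigma_perm n i)) [1..<n+1])"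
      unfolding map_sigma_perm[OF assms] unfolding upt_sigma_split[OF assms] by simp
  qed
qed

locale sigma_semigroup = carrier_semigroup +
  fixes n :: nat
  assumes four_le: "4 \<le> n"
    and sigma_swap: "\<lbrakk>a \<in> A; b \<in> A; c \<in> A; d \<in> A; set us \<subseteq> A; length us = n - 4\<rbrakk>
      \<Longrightarrow> lprod mul (a # b # us @ [c, d]) = lprod mul (b # a # us @ [d, c])"
begin

lemma opposite_sigma_semigroup: "sigma_semigroup A (\<lambda>a b. mul b a) n"
proof -
  interpret opp: carrier_semigroup A "\<lambda>a b. mul b a" by (rule opposite_carrier_semigroup)
  show ?thesis
  proof unfold_locales
    fix a b c d us
    assume "a \<in> A" "b \<in> A" "c \<in> A" "d \<in> A" "set us \<subseteq> A" "length us = n - 4"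
    then show "lprod (\<lambda>a b. mul b a) (a # b # us @ [c, d]) = lprod (\<lambda>a b. mul b a) (b # a # us @ [d, c])"
      using sigma_swap[of d c b a "rev us"] by (simp add: lprod_opposite del: lprod.simps(3))
  qed (use four_le in auto)
qed

lemma swap_if_long_suffix:
  assumes "x \<in> A" "y \<in> A" "set L \<subseteq> A" "set R \<subseteq> A" "n - 1 \<le> length R"
  shows "lprod mul (L @ x # y # R) = lprod mul (L @ y # x # R)"
proof -
  obtain us t1 t2 t3 R' where R: "R = us @ [t1, t2, t3] @ R'" and us: "length us = n - 4"
  proof -
    have "3 \<le> length (drop (n - 4) R)"
      using assms(5) four_le by simp
    then obtain t1 t2 t3 R' where "drop (n - 4) R = t1 # t2 # t3 # R'"
      by (metis Suc_le_length_iff numeral_3_eq_3)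
    then have "R = take (n - 4) R @ [t1, t2, t3] @ R'"
      by (metis append_take_drop_id append_Cons append_Nil)
    then show thesis
      using that assms(5) four_le by simp
  qed
  have in_A: "set us \<subseteq> A" "t1 \<in> A" "t2 \<in> A" "t3 \<in> A" "set R' \<subseteq> A"
    using assms(4) R by auto
  define p where "p = lprod mul (x # y # us)"
  define q where "q = lprod mul (y # x # us)"
  have "p \<in> A" "q \<in> A"
    unfolding p_def q_def using assms in_A by (auto intro!: lprod_closed simp del: lprod.simps)
  moreover have p_app: "lprod mul (x # y # us @ zs) = mul p (lprod mul zs)"
    and q_app: "lprod mul (y # x # us @ zs) = mul q (lprod mul zs)" if "zs \<noteq> []" "set zs \<subseteq> A" for zs
    unfolding p_def q_def
    using lprod_append[of "x # y # us" zs] lprod_append[of "y # x # us" zs] assms in_A that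
    by simp_all
  moreover have "mul p (mul s t) = mul q (mul t s)" if "s \<in> A" "t \<in> A" for s t
    using sigma_swap[of x y s t us] p_app[of "[s, t]"] q_app[of "[t, s]"] assms in_A us that
    by simp
  ultimately have "lprod mul (x # y # us @ [t1, t2, t3]) = lprod mul (y # x # us @ [t1, t2, t3])"
    using pair_swap_three_cycle[of p q t1 t2 t3] in_A by simp
  then show ?thesis
    using lprod_append_lprod[of "x # y # us @ [t1, t2, t3]" L R']
      lprod_append_lprod[of "y # x # us @ [t1, t2, t3]" L R'] assms in_A R
    by simp
qed

lemma swap_if_long_prefix:
  assumes "x \<in> A" "y \<in> A" "set L \<subseteq> A" "set R \<subseteq> A" "n - 1 \<le> length L"
  shows "lprod mul (L @ x # y # R) = lprod mul (L @ y # x # R)"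
proof -
  have "lprod (\<lambda>a b. mul b a) (rev R @ y # x # rev L) = lprod (\<lambda>a b. mul b a) (rev R @ x # y # rev L)"
    using sigma_semigroup.swap_if_long_suffix[OF opposite_sigma_semigroup, of y x "rev R" "rev L"]
      assms by simp
  then show ?thesis
    using assms by (simp add: lprod_opposite)
qed

lemma swap_adjacent_if_short_prefix:
  assumes "x \<in> A" "y \<in> A" "set L \<subseteq> A" "set R \<subseteq> A"
    and "length L + length R = 2 * n - 5" "length L \<le> n - 3"
  shows "lprod mul (L @ x # y # R) = lprod mul (L @ y # x # R)"
proof (cases "n - 1 \<le> length R")
  case True
  then show ?thesis
    using swap_if_long_suffix assms by blast
next
  case False
  then have len: "length L = n - 3" "length R = n - 2"
    using assms(5,6) four_le by linarith+
  obtain M r1 r2 where R: "R = M @ [r1, r2]" and M: "length M = n - 4"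
  proof -
    have "length (drop (n - 4) R) = 2"
      using len four_le by simp
    then obtain r1 r2 where "drop (n - 4) R = [r1, r2]"
      by (auto simp: length_Suc_conv numeral_2_eq_2 simp del: length_drop)
    then have "R = take (n - 4) R @ [r1, r2]"
      by (metis append_take_drop_id)
    then show thesis
      using that len by simp
  qed
  have in_A: "r1 \<in> A" "r2 \<in> A" "set M \<subseteq> A"
    using assms(4) R by auto
  have "L \<noteq> []"
    using len four_le by auto
  have Lx: "lprod mul (L @ [x]) \<in> A"
    using assms by (intro lprod_closed) auto
  have l: "lprod mul L \<in> A"
    using assms \<open>L \<noteq> []\<close> by (intro lprod_closed)
  have "lprod mul (L @ x # y # R) = lprod mul (lprod mul (L @ [x]) # y # M @ [r1, r2])"
    using lprod_append_lprod[of "L @ [x]" "[]" "y # R"] assms R by simp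
  also have "\<dots> = lprod mul (y # lprod mul (L @ [x]) # M @ [r2, r1])"
    using sigma_swap Lx assms in_A M by blast
  also have "\<dots> = lprod mul (y # L @ x # M @ [r2, r1])"
    using lprod_append_lprod[of "L @ [x]" "[y]" "M @ [r2, r1]"] assms in_A by simp
  also have "\<dots> = lprod mul (y # L @ x # R)"
    using swap_if_long_prefix[of r2 r1 "y # L @ x # M" "[]"] assms in_A len M four_le R by simp
  also have "\<dots> = lprod mul (y # lprod mul L # x # R)"
    using lprod_append_lprod[of L "[y]" "x # R"] assms \<open>L \<noteq> []\<close> by simp
  also have "\<dots> = lprod mul (lprod mul L # y # x # R)"
    using swap_if_long_suffix[of y "lprod mul L" "[]" "x # R"] assms l len by simp
  also have "\<dots> = lprod mul (L @ y # x # R)"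
    using lprod_append_lprod[of L "[]" "y # x # R"] assms \<open>L \<noteq> []\<close> by simp
  finally show ?thesis .
qed

lemma swap_adjacent:
  assumes "x \<in> A" "y \<in> A" "set L \<subseteq> A" "set R \<subseteq> A" "length L + length R = 2 * n - 5"
  shows "lprod mul (L @ x # y # R) = lprod mul (L @ y # x # R)"
proof (cases "length L \<le> n - 3")
  case True
  then show ?thesis
    using swap_adjacent_if_short_prefix assms by blast
next
  case False
  then have "lprod (\<lambda>a b. mul b a) (rev R @ y # x # rev L)
      = lprod (\<lambda>a b. mul b a) (rev R @ x # y # rev L)"
    using sigma_semigroup.swap_adjacent_if_short_prefix[OF opposite_sigma_semigroup,
        of y x "rev R" "rev L"] assms
    by simp
  then show ?thesis
    using assms by (simp add: lprod_opposite)
qed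

lemma satisfies_adjacent_transposition:
  assumes "1 \<le> i" "i < 2 * n - 3"
  shows "satisfies_identity A mul (2 * n - 3) (transpose i (Suc i))"
  unfolding satisfies_identity_def
proof (intro allI impI)
  let ?k = "2 * n - 3"
  fix f assume f: "\<forall>j\<in>{1..?k}. f j \<in> A"
  have "[1..<i + (?k + 1 - i)] = [1..<i] @ [i..<i + (?k + 1 - i)]"
    by (rule upt_add_eq_append) (use assms in simp)
  moreover have "i + (?k + 1 - i) = ?k + 1"
    using assms by simp
  ultimately have "[1..<?k+1] = [1..<i] @ [i..<?k+1]"
    by simp
  also have "[i..<?k+1] = i # Suc i # [Suc (Suc i)..<?k+1]"
    using assms by (simp add: upt_conv_Cons del: upt.simps)
  finally have split: "[1..<?k+1] = [1..<i] @ i # Suc i # [Suc (Suc i)..<?k+1]" .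
  have fixed: "map (\<lambda>j. f (transpose i (Suc i) j)) [1..<i] = map f [1..<i]"
    "map (\<lambda>j. f (transpose i (Suc i) j)) [Suc (Suc i)..<?k+1] = map f [Suc (Suc i)..<?k+1]"
    by (auto intro: map_cong)
  have "lprod mul (map f [1..<i] @ f i # f (Suc i) # map f [Suc (Suc i)..<?k+1])
      = lprod mul (map f [1..<i] @ f (Suc i) # f i # map f [Suc (Suc i)..<?k+1])"
    using f assms four_le by (intro swap_adjacent) auto
  then show "lprod mul (map f [1..<?k+1]) = lprod mul (map (\<lambda>j. f (transpose i (Suc i) j)) [1..<?k+1])"
    unfolding split map_append list.map fixed by simp
qed

end

lemma (in sigma_semigroup) eventually_commutative: "eventually_commutative A mul (2 * n - 3)"
  by (rule eventually_commutative_if_adjacent_transpositions) (rule satisfies_adjacent_transposition)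

lemma sigma_semigroupI:
  assumes "is_assoc_algebra A add zero sc mul" "satisfies_identity A mul n (sigma_perm n)" "4 \<le> n"
  shows "sigma_semigroup A mul n"
proof unfold_locales
  show "mul a b \<in> A" if "a \<in> A" "b \<in> A" for a b
    using assms(1) that by (simp add: is_assoc_algebra_def)
  show "mul (mul a b) c = mul a (mul b c)" if "a \<in> A" "b \<in> A" "c \<in> A" for a b c
    using assms(1) that by (simp add: is_assoc_algebra_def)
  show "lprod mul (a # b # us @ [c, d]) = lprod mul (b # a # us @ [d, c])"
    if "a \<in> A" "b \<in> A" "c \<in> A" "d \<in> A" "set us \<subseteq> A" "length us = n - 4" for a b c d us
    using assms(2) that unfolding satisfies_sigma_identity_iff[OF assms(3)] by blast
qed (rule assms(3))

section \<open>A trivial extension that is not eventually commutative of lower degree\<close>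

unbundle fps_syntax

lemma fps_X_power_dvd_iff: "fps_X ^ m dvd (f :: 'a::comm_ring_1 fps) \<longleftrightarrow> (\<forall>i<m. f $ i = 0)"
proof
  assume "fps_X ^ m dvd f"
  then obtain g where "f = fps_X ^ m * g"
    by (elim dvdE)
  then show "\<forall>i<m. f $ i = 0"
    by (simp add: fps_X_power_mult_nth)
next
  assume "\<forall>i<m. f $ i = 0"
  then have "f = fps_shift m f * fps_X ^ m"
    by (intro fps_ext) (simp add: fps_X_power_mult_right_nth)
  then show "fps_X ^ m dvd f"
    by (metis dvd_triv_right)
qed

text \<open>The bimodule: functions \<phi> on pairs of naturals vanishing beyond total degree T, on which a
  series acts from the left through the first argument (lact) and from the right through the
  second (ract); shift_module N T asks the two actions of X to agree wherever one argument is at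
  least N.\<close>

definition lact :: "nat \<Rightarrow> 'k::comm_ring_1 fps \<Rightarrow> (nat \<Rightarrow> nat \<Rightarrow> 'k) \<Rightarrow> nat \<Rightarrow> nat \<Rightarrow> 'k" where
  "lact T f \<phi> = (\<lambda>a b. \<Sum>i\<le>T. f $ i * \<phi> (a + i) b)"

definition ract :: "nat \<Rightarrow> 'k::comm_ring_1 fps \<Rightarrow> (nat \<Rightarrow> nat \<Rightarrow> 'k) \<Rightarrow> nat \<Rightarrow> nat \<Rightarrow> 'k" where
  "ract T f \<phi> = (\<lambda>a b. \<Sum>j\<le>T. f $ j * \<phi> a (b + j))"

definition vanishes_beyond :: "nat \<Rightarrow> (nat \<Rightarrow> nat \<Rightarrow> 'k::zero) \<Rightarrow> bool" where
  "vanishes_beyond T \<phi> \<longleftrightarrow> (\<forall>a b. T < a + b \<longrightarrow> \<phi> a b = 0)"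

definition shift_module :: "nat \<Rightarrow> nat \<Rightarrow> (nat \<Rightarrow> nat \<Rightarrow> 'k::comm_ring_1) set" where
  "shift_module N T =
    {\<phi>. vanishes_beyond T \<phi> \<and> (\<forall>a b. N \<le> a \<or> N \<le> b \<longrightarrow> \<phi> (Suc a) b = \<phi> a (Suc b))}"

lemma lact_add_series: "lact T (f + g) \<phi> = (\<lambda>a b. lact T f \<phi> a b + lact T g \<phi> a b)"
  and ract_add_series: "ract T (f + g) \<phi> = (\<lambda>a b. ract T f \<phi> a b + ract T g \<phi> a b)"
  and lact_add_fun: "lact T f (\<lambda>a b. \<phi> a b + \<psi> a b) = (\<lambda>a b. lact T f \<phi> a b + lact T f \<psi> a b)"
  and ract_add_fun: "ract T f (\<lambda>a b. \<phi> a b + \<psi> a b) = (\<lambda>a b. ract T f \<phi> a b + ract T f \<psi> a b)"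
  by (simp_all add: lact_def ract_def algebra_simps sum.distrib)

lemma lact_scale_series: "lact T (fps_const c * f) \<phi> = (\<lambda>a b. c * lact T f \<phi> a b)"
  and ract_scale_series: "ract T (fps_const c * f) \<phi> = (\<lambda>a b. c * ract T f \<phi> a b)"
  and lact_scale_fun: "lact T f (\<lambda>a b. c * \<phi> a b) = (\<lambda>a b. c * lact T f \<phi> a b)"
  and ract_scale_fun: "ract T f (\<lambda>a b. c * \<phi> a b) = (\<lambda>a b. c * ract T f \<phi> a b)"
  by (simp_all add: lact_def ract_def sum_distrib_left algebra_simps)

lemma lact_zero_series [simp]: "lact T 0 \<phi> = (\<lambda>a b. 0)"
  and ract_zero_series [simp]: "ract T 0 \<phi> = (\<lambda>a b. 0)"
  and lact_zero_fun [simp]: "lact T f (\<lambda>a b. 0) = (\<lambda>a b. 0)"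
  and ract_zero_fun [simp]: "ract T f (\<lambda>a b. 0) = (\<lambda>a b. 0)"
  by (simp_all add: lact_def ract_def)

lemma lact_X_power: "p \<le> T \<Longrightarrow> lact T (fps_X ^ p) \<phi> a b = \<phi> (a + p) b"
  and ract_X_power: "p \<le> T \<Longrightarrow> ract T (fps_X ^ p) \<phi> a b = \<phi> a (b + p)"
  by (simp_all add: lact_def ract_def mult_delta_left)

lemma lact_fps_X: "0 < T \<Longrightarrow> lact T fps_X \<phi> a b = \<phi> (Suc a) b"
  using lact_X_power[of 1 T \<phi> a b] by simp

lemma vanishes_beyond_lact: "vanishes_beyond T \<phi> \<Longrightarrow> vanishes_beyond T (lact T f \<phi>)"
  and vanishes_beyond_ract: "vanishes_beyond T \<phi> \<Longrightarrow> vanishes_beyond T (ract T f \<phi>)"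
  by (simp_all add: vanishes_beyond_def lact_def ract_def)

lemma lact_ract_commute: "lact T f (ract T g \<phi>) = ract T g (lact T f \<phi>)"
proof (intro ext)
  fix a b
  have "lact T f (ract T g \<phi>) a b = (\<Sum>i\<le>T. \<Sum>j\<le>T. f $ i * (g $ j * \<phi> (a + i) (b + j)))"
    by (simp add: lact_def ract_def sum_distrib_left)
  also have "\<dots> = (\<Sum>j\<le>T. \<Sum>i\<le>T. f $ i * (g $ j * \<phi> (a + i) (b + j)))"
    by (rule sum.swap)
  also have "\<dots> = ract T g (lact T f \<phi>) a b"
    by (simp add: lact_def ract_def sum_distrib_left mult.left_commute)
  finally show "lact T f (ract T g \<phi>) a b = ract T g (lact T f \<phi>) a b" .
qed

text \<open>Truncating the sums at T loses nothing because \<phi> vanishes beyond T.\<close>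

lemma lact_mult:
  assumes "vanishes_beyond T \<phi>"
  shows "lact T (f * g) \<phi> = lact T f (lact T g \<phi>)"
proof (intro ext)
  fix a b
  define F where "F i j = f $ i * (g $ j * \<phi> (a + i + j) b)" for i j
  have F_beyond: "F i j = 0" if "T < i + j" for i j
  proof -
    have "T < (a + i + j) + b"
      using that by simp
    then show ?thesis
      using assms by (simp add: F_def vanishes_beyond_def)
  qed
  have "lact T f (lact T g \<phi>) a b = (\<Sum>(i, j)\<in>{..T} \<times> {..T}. F i j)"
    by (simp add: lact_def F_def sum_distrib_left add.assoc sum.cartesian_product)
  also have "\<dots> = (\<Sum>(i, j)\<in>{(i, j). i + j \<le> T}. F i j)"
  proof (rule sum.mono_neutral_right)
    show "\<forall>x\<in>{..T} \<times> {..T} - {(i, j). i + j \<le> T}. (case x of (i, j) \<Rightarrow> F i j) = 0"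
      using F_beyond not_le by fastforce
  qed auto
  also have "\<dots> = (\<Sum>k\<le>T. \<Sum>i\<le>k. F i (k - i))"
    by (rule sum.triangle_reindex_eq)
  also have "\<dots> = (\<Sum>k\<le>T. (f * g) $ k * \<phi> (a + k) b)"
    by (intro sum.cong refl)
      (simp add: F_def fps_mult_nth sum_distrib_right atLeast0AtMost mult.assoc)
  finally show "lact T (f * g) \<phi> a b = lact T f (lact T g \<phi>) a b"
    by (simp add: lact_def)
qed

lemma ract_conv_lact: "ract T f \<phi> = (\<lambda>a b. lact T f (\<lambda>a b. \<phi> b a) b a)"
  by (simp add: lact_def ract_def)

lemma ract_mult: "vanishes_beyond T \<phi> \<Longrightarrow> ract T (f * g) \<phi> = ract T f (ract T g \<phi>)"
  using lact_mult[of T "\<lambda>a b. \<phi> b a" f g]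
  by (simp add: ract_conv_lact vanishes_beyond_def add.commute)

lemma shift_module_shift:
  assumes "\<phi> \<in> shift_module N T" "N \<le> a \<or> N \<le> b"
  shows "\<phi> (a + i) b = \<phi> a (b + i)"
  using assms(2)
proof (induction i arbitrary: a)
  case (Suc i)
  have "\<phi> (a + Suc i) b = \<phi> (Suc a + i) b"
    by simp
  also have "\<dots> = \<phi> (Suc a) (b + i)"
    using Suc.prems by (intro Suc.IH) auto
  also have "\<dots> = \<phi> a (b + Suc i)"
    using assms(1) Suc.prems by (auto simp: shift_module_def)
  finally show ?case .
qed simp

text \<open>Acting by a series divisible by X^N lands in the part of the module on which the
  two actions agree.\<close>

lemma lact_balanced:
  assumes "\<phi> \<in> shift_module N T" "fps_X ^ N dvd f"
  shows "lact T f \<phi> (a + i) b = lact T f \<phi> a (b + i)"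
  unfolding lact_def
proof (intro sum.cong refl)
  fix j
  show "f $ j * \<phi> (a + i + j) b = f $ j * \<phi> (a + j) (b + i)"
    using assms shift_module_shift[OF assms(1), of "a + j" b i]
    by (cases "j < N") (auto simp: fps_X_power_dvd_iff ac_simps)
qed

lemma ract_balanced:
  assumes "\<phi> \<in> shift_module N T" "fps_X ^ N dvd f"
  shows "ract T f \<phi> (a + i) b = ract T f \<phi> a (b + i)"
  unfolding ract_def
proof (intro sum.cong refl)
  fix j
  show "f $ j * \<phi> (a + i) (b + j) = f $ j * \<phi> a (b + i + j)"
    using assms shift_module_shift[OF assms(1), of a "b + j" i]
    by (cases "j < N") (auto simp: fps_X_power_dvd_iff ac_simps)
qed

lemma lact_eq_ract_if_balanced: "(\<And>a b i. \<psi> (a + i) b = \<psi> a (b + i)) \<Longrightarrow> lact T f \<psi> = ract T f \<psi>"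
  by (simp add: lact_def ract_def)

lemma vanishes_beyond_if_shift_module: "\<phi> \<in> shift_module N T \<Longrightarrow> vanishes_beyond T \<phi>"
  by (simp add: shift_module_def)

lemma lact_ract_eq_ract_mult:
  assumes "\<phi> \<in> shift_module N T" "fps_X ^ N dvd g"
  shows "lact T f (ract T g \<phi>) = ract T (f * g) \<phi>"
proof -
  have "lact T f (ract T g \<phi>) = ract T f (ract T g \<phi>)"
    by (rule lact_eq_ract_if_balanced) (rule ract_balanced[OF assms])
  also have "\<dots> = ract T (f * g) \<phi>"
    using ract_mult[OF vanishes_beyond_if_shift_module[OF assms(1)]] by simp
  finally show ?thesis .
qed

lemma lact_ract_eq_lact_mult:
  assumes "\<phi> \<in> shift_module N T" "fps_X ^ N dvd f"
  shows "lact T f (ract T g \<phi>) = lact T (f * g) \<phi>"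
proof -
  have "lact T f (ract T g \<phi>) = ract T g (lact T f \<phi>)"
    by (rule lact_ract_commute)
  also have "\<dots> = lact T g (lact T f \<phi>)"
    by (rule lact_eq_ract_if_balanced[symmetric]) (rule lact_balanced[OF assms])
  also have "\<dots> = lact T (g * f) \<phi>"
    by (rule lact_mult[OF vanishes_beyond_if_shift_module[OF assms(1)], symmetric])
  finally show ?thesis
    by (simp add: mult.commute)
qed

lemma shift_module_lact: "\<phi> \<in> shift_module N T \<Longrightarrow> lact T f \<phi> \<in> shift_module N T"
  using vanishes_beyond_lact[of T \<phi> f] unfolding shift_module_def
  by (auto simp: lact_def intro!: sum.cong)

lemma shift_module_ract: "\<phi> \<in> shift_module N T \<Longrightarrow> ract T f \<phi> \<in> shift_module N T"
  using vanishes_beyond_ract[of T \<phi> f] unfolding shift_module_def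
  by (auto simp: ract_def intro!: sum.cong)

lemma shift_module_add:
    "\<phi> \<in> shift_module N T \<Longrightarrow> \<psi> \<in> shift_module N T \<Longrightarrow> (\<lambda>a b. \<phi> a b + \<psi> a b) \<in> shift_module N T"
  and shift_module_scale: "\<phi> \<in> shift_module N T \<Longrightarrow> (\<lambda>a b. c * \<phi> a b) \<in> shift_module N T"
  and shift_module_zero: "(\<lambda>a b. 0) \<in> shift_module N T"
  by (simp_all add: shift_module_def vanishes_beyond_def)

text \<open>An element of the algebra is a pair of a series and a module element, stored in a single
  function on nat: the series coefficients at the even places, the module element at the odd
  places via the Cantor pairing.\<close>

definition ser_part :: "(nat \<Rightarrow> 'k) \<Rightarrow> 'k fps" where
  "ser_part e = Abs_fps (\<lambda>i. e (2 * i))"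

definition mod_part :: "(nat \<Rightarrow> 'k) \<Rightarrow> nat \<Rightarrow> nat \<Rightarrow> 'k" where
  "mod_part e = (\<lambda>a b. e (Suc (2 * prod_encode (a, b))))"

definition pack :: "'k fps \<Rightarrow> (nat \<Rightarrow> nat \<Rightarrow> 'k) \<Rightarrow> nat \<Rightarrow> 'k" where
  "pack f \<phi> = (\<lambda>i. if even i then f $ (i div 2) else case_prod \<phi> (prod_decode (i div 2)))"

lemma ser_part_pack [simp]: "ser_part (pack f \<phi>) = f"
  and mod_part_pack [simp]: "mod_part (pack f \<phi>) = \<phi>"
  by (simp_all add: ser_part_def mod_part_def pack_def fps_nth_inverse)

lemma parts_eqI: "ser_part e = ser_part e' \<Longrightarrow> mod_part e = mod_part e' \<Longrightarrow> e = e'"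
proof (intro ext)
  fix i
  assume "ser_part e = ser_part e'" "mod_part e = mod_part e'"
  then have "e (2 * j) = e' (2 * j)" "e (Suc (2 * prod_encode (a, b))) = e' (Suc (2 * prod_encode (a, b)))"
    for j a b
    by (metis fps_nth_Abs_fps ser_part_def, metis mod_part_def)
  moreover have "i = 2 * (i div 2) \<or> i = Suc (2 * (i div 2))"
    by presburger
  ultimately show "e i = e' i"
    by (metis prod_decode_inverse surj_pair)
qed

lemma ser_part_add [simp]: "ser_part (\<lambda>i. e i + e' i) = ser_part e + ser_part (e' :: nat \<Rightarrow> 'k::comm_ring_1)"
  and mod_part_add [simp]: "mod_part (\<lambda>i. e i + e' i) = (\<lambda>a b. mod_part e a b + mod_part e' a b)"
  and ser_part_scale [simp]: "ser_part (\<lambda>i. c * e i) = fps_const c * ser_part (e :: nat \<Rightarrow> 'k::comm_ring_1)"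
  and mod_part_scale [simp]: "mod_part (\<lambda>i. c * e i) = (\<lambda>a b. c * mod_part e a b)"
  and ser_part_zero [simp]: "ser_part (\<lambda>i. 0 :: 'k::comm_ring_1) = 0"
  and mod_part_zero [simp]: "mod_part (\<lambda>i. 0) = (\<lambda>a b. 0)"
  by (simp_all add: ser_part_def mod_part_def fps_eq_iff)

text \<open>The trivial extension of the ideal X k[[X]] by shift_module N (2 N), with product
  (f, \<phi>) (g, \<psi>) = (f g, f \<psi> + \<phi> g).\<close>

definition null_ext_carrier :: "nat \<Rightarrow> (nat \<Rightarrow> 'k::comm_ring_1) set" where
  "null_ext_carrier N = {e. fps_X dvd ser_part e \<and> mod_part e \<in> shift_module N (2 * N)}"

definition null_ext_mul :: "nat \<Rightarrow> (nat \<Rightarrow> 'k::comm_ring_1) \<Rightarrow> (nat \<Rightarrow> 'k) \<Rightarrow> nat \<Rightarrow> 'k" where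
  "null_ext_mul N e e' = pack (ser_part e * ser_part e')
     (\<lambda>a b. lact (2 * N) (ser_part e) (mod_part e') a b + ract (2 * N) (ser_part e') (mod_part e) a b)"

lemma ser_part_null_ext_mul [simp]: "ser_part (null_ext_mul N e e') = ser_part e * ser_part e'"
  and mod_part_null_ext_mul [simp]: "mod_part (null_ext_mul N e e') =
    (\<lambda>a b. lact (2 * N) (ser_part e) (mod_part e') a b + ract (2 * N) (ser_part e') (mod_part e) a b)"
  by (simp_all add: null_ext_mul_def)

lemma fps_X_dvd_ser_part: "e \<in> null_ext_carrier N \<Longrightarrow> fps_X dvd ser_part e"
  and mod_part_in_shift_module: "e \<in> null_ext_carrier N \<Longrightarrow> mod_part e \<in> shift_module N (2 * N)"
  by (simp_all add: null_ext_carrier_def)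

lemma null_ext_mul_closed:
  "e \<in> null_ext_carrier N \<Longrightarrow> e' \<in> null_ext_carrier N \<Longrightarrow> null_ext_mul N e e' \<in> null_ext_carrier N"
  by (simp add: null_ext_carrier_def shift_module_add shift_module_lact shift_module_ract)

lemma null_ext_mul_assoc:
  assumes "e1 \<in> null_ext_carrier N" "e2 \<in> null_ext_carrier N" "e3 \<in> null_ext_carrier N"
  shows "null_ext_mul N (null_ext_mul N e1 e2) e3 = null_ext_mul N e1 (null_ext_mul N e2 e3)"
proof (rule parts_eqI)
  let ?T = "2 * N"
  have "vanishes_beyond ?T (mod_part e1)" "vanishes_beyond ?T (mod_part e3)"
    using assms by (blast intro: vanishes_beyond_if_shift_module mod_part_in_shift_module)+
  then have "lact ?T (ser_part e1 * ser_part e2) (mod_part e3)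
      = lact ?T (ser_part e1) (lact ?T (ser_part e2) (mod_part e3))"
    and "ract ?T (ser_part e2 * ser_part e3) (mod_part e1)
      = ract ?T (ser_part e3) (ract ?T (ser_part e2) (mod_part e1))"
    by (simp_all add: lact_mult ract_mult[symmetric] mult.commute)
  then show "mod_part (null_ext_mul N (null_ext_mul N e1 e2) e3)
      = mod_part (null_ext_mul N e1 (null_ext_mul N e2 e3))"
    by (simp add: lact_add_fun ract_add_fun lact_ract_commute add.assoc)
qed (simp add: mult.assoc)

lemma null_ext_zero_closed: "(\<lambda>i. 0) \<in> null_ext_carrier N"
  by (simp add: null_ext_carrier_def shift_module_zero)

lemma null_ext_add_closed:
  "e \<in> null_ext_carrier N \<Longrightarrow> e' \<in> null_ext_carrier N \<Longrightarrow> (\<lambda>i. e i + e' i) \<in> null_ext_carrier N"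
  by (simp add: null_ext_carrier_def shift_module_add)

lemma null_ext_scale_closed: "e \<in> null_ext_carrier N \<Longrightarrow> (\<lambda>i. c * e i) \<in> null_ext_carrier N"
  by (simp add: null_ext_carrier_def shift_module_scale)

lemma null_ext_mul_add_left:
    "null_ext_mul N (\<lambda>i. e i + e' i) e'' = (\<lambda>i. null_ext_mul N e e'' i + null_ext_mul N e' e'' i)"
  and null_ext_mul_add_right:
    "null_ext_mul N e (\<lambda>i. e' i + e'' i) = (\<lambda>i. null_ext_mul N e e' i + null_ext_mul N e e'' i)"
  by (rule parts_eqI; simp add: algebra_simps lact_add_fun lact_add_series ract_add_fun ract_add_series)+

lemma null_ext_mul_scale_left: "(\<lambda>i. c * null_ext_mul N e e' i) = null_ext_mul N (\<lambda>i. c * e i) e'"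
  and null_ext_mul_scale_right: "null_ext_mul N e (\<lambda>i. c * e' i) = null_ext_mul N (\<lambda>i. c * e i) e'"
  by (rule parts_eqI;
      simp add: algebra_simps lact_scale_fun lact_scale_series ract_scale_fun ract_scale_series)+

lemma null_ext_is_assoc_algebra:
  "is_assoc_algebra (null_ext_carrier N :: (nat \<Rightarrow> 'k::field) set)
     (\<lambda>e e' i. e i + e' i) (\<lambda>i. 0) (\<lambda>c e i. c * e i) (null_ext_mul N)"
  unfolding is_assoc_algebra_def
proof (intro conjI ballI allI)
  fix e :: "nat \<Rightarrow> 'k" assume "e \<in> null_ext_carrier N"
  then show "\<exists>e'\<in>null_ext_carrier N. (\<lambda>i. e i + e' i) = (\<lambda>i. 0)"
    by (intro bexI[of _ "\<lambda>i. (- 1) * e i"] null_ext_scale_closed) auto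
qed (simp_all add: null_ext_zero_closed null_ext_add_closed null_ext_scale_closed
      null_ext_mul_closed null_ext_mul_assoc null_ext_mul_add_left null_ext_mul_add_right
      null_ext_mul_scale_left null_ext_mul_scale_right algebra_simps)

lemma null_ext_carrier_semigroup: "carrier_semigroup (null_ext_carrier N) (null_ext_mul N)"
  by unfold_locales (auto intro: null_ext_mul_closed null_ext_mul_assoc)

lemma ser_part_lprod:
  "xs \<noteq> [] \<Longrightarrow> ser_part (lprod (null_ext_mul N) xs) = prod_list (map ser_part xs)"
  by (induction xs rule: induct_list012) simp_all

lemma fps_X_power_dvd_ser_part_lprod:
  "xs \<noteq> [] \<Longrightarrow> set xs \<subseteq> null_ext_carrier N
    \<Longrightarrow> fps_X ^ length xs dvd ser_part (lprod (null_ext_mul N) xs)"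
  by (induction xs rule: induct_list012) (auto simp: null_ext_carrier_def mult_dvd_mono)

text \<open>Once the series acting from the left has order at least N it no longer distinguishes
  c d from d c; every letter of us contributes one to that order.\<close>

lemma lact_mod_part_swap_last:
  assumes "c \<in> null_ext_carrier N" "d \<in> null_ext_carrier N" "set us \<subseteq> null_ext_carrier N"
    and "fps_X ^ (N - length us) dvd Q"
  shows "lact (2 * N) Q (mod_part (lprod (null_ext_mul N) (us @ [c, d])))
    = lact (2 * N) Q (mod_part (lprod (null_ext_mul N) (us @ [d, c])))"
  using assms(3,4)
proof (induction us arbitrary: Q)
  case Nil
  let ?T = "2 * N"
  have "mod_part c \<in> shift_module N ?T" "mod_part d \<in> shift_module N ?T"
    using assms(1,2) by (simp_all add: mod_part_in_shift_module)
  then have "lact ?T Q (lact ?T (ser_part c) (mod_part d)) = lact ?T (Q * ser_part c) (mod_part d)"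
    and "lact ?T Q (lact ?T (ser_part d) (mod_part c)) = lact ?T (Q * ser_part d) (mod_part c)"
    and "lact ?T Q (ract ?T (ser_part d) (mod_part c)) = lact ?T (Q * ser_part d) (mod_part c)"
    and "lact ?T Q (ract ?T (ser_part c) (mod_part d)) = lact ?T (Q * ser_part c) (mod_part d)"
    using Nil.prems
    by (simp_all add: lact_mult vanishes_beyond_if_shift_module lact_ract_eq_lact_mult)
  then show ?case
    by (simp add: lact_add_fun add.commute)
next
  case (Cons u us)
  interpret carrier_semigroup "null_ext_carrier N" "null_ext_mul N"
    by (rule null_ext_carrier_semigroup)
  let ?T = "2 * N"
  define V where "V = lprod (null_ext_mul N) (us @ [c, d])"
  define V' where "V' = lprod (null_ext_mul N) (us @ [d, c])"
  have "V \<in> null_ext_carrier N" "V' \<in> null_ext_carrier N"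
    using assms Cons.prems unfolding V_def V'_def by (auto intro!: lprod_closed)
  then have "vanishes_beyond ?T (mod_part V)" "vanishes_beyond ?T (mod_part V')"
    by (blast intro: vanishes_beyond_if_shift_module mod_part_in_shift_module)+
  moreover have "ser_part V' = ser_part V"
    by (simp add: V_def V'_def ser_part_lprod)
  moreover have "fps_X ^ (N - length us) dvd Q * ser_part u"
  proof -
    have "fps_X ^ (N - length us) dvd fps_X ^ Suc (N - length (u # us))"
      by (rule le_imp_power_dvd) simp
    also have "\<dots> = fps_X ^ (N - length (u # us)) * fps_X"
      by (rule power_Suc2)
    also have "\<dots> dvd Q * ser_part u"
      using Cons.prems by (intro mult_dvd_mono fps_X_dvd_ser_part) auto
    finally show ?thesis .
  qed
  then have "lact ?T (Q * ser_part u) (mod_part V) = lact ?T (Q * ser_part u) (mod_part V')"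
    using Cons by (simp add: V_def V'_def)
  ultimately show ?case
    by (simp add: V_def [symmetric] V'_def [symmetric] lprod_Cons lact_add_fun lact_mult)
qed

lemma null_ext_sigma_swap:
  assumes "a \<in> null_ext_carrier N" "b \<in> null_ext_carrier N" "c \<in> null_ext_carrier N"
    and "d \<in> null_ext_carrier N" "set us \<subseteq> null_ext_carrier N" "length us = N - 2"
  shows "lprod (null_ext_mul N) (a # b # us @ [c, d]) = lprod (null_ext_mul N) (b # a # us @ [d, c])"
proof -
  interpret carrier_semigroup "null_ext_carrier N" "null_ext_mul N"
    by (rule null_ext_carrier_semigroup)
  let ?T = "2 * N"
  define V where "V = lprod (null_ext_mul N) (us @ [c, d])"
  define V' where "V' = lprod (null_ext_mul N) (us @ [d, c])"
  have V: "V \<in> null_ext_carrier N" "V' \<in> null_ext_carrier N"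
    using assms unfolding V_def V'_def by (auto intro!: lprod_closed)
  have ser_V': "ser_part V' = ser_part V"
    by (simp add: V_def V'_def ser_part_lprod)
  have "fps_X ^ N dvd fps_X ^ length (us @ [c, d])"
    using assms(6) by (intro le_imp_power_dvd) simp
  also have "\<dots> dvd ser_part V"
    unfolding V_def using assms by (intro fps_X_power_dvd_ser_part_lprod) auto
  finally have X_dvd_V: "fps_X ^ N dvd ser_part V" .
  have "fps_X ^ (N - length us) dvd fps_X ^ 2"
    using assms(6) by (intro le_imp_power_dvd) simp
  also have "\<dots> dvd ser_part a * ser_part b"
    unfolding power2_eq_square using assms by (intro mult_dvd_mono fps_X_dvd_ser_part)
  finally have swap: "lact ?T (ser_part a * ser_part b) (mod_part V)
      = lact ?T (ser_part a * ser_part b) (mod_part V')"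
    unfolding V_def V'_def using assms by (intro lact_mod_part_swap_last)
  have vanish: "vanishes_beyond ?T (mod_part V)" "vanishes_beyond ?T (mod_part V')"
    using V by (blast intro: vanishes_beyond_if_shift_module mod_part_in_shift_module)+
  have "lact ?T (ser_part a) (lact ?T (ser_part b) (mod_part V))
      = lact ?T (ser_part a * ser_part b) (mod_part V)"
    by (rule lact_mult[OF vanish(1), symmetric])
  moreover have "lact ?T (ser_part b) (lact ?T (ser_part a) (mod_part V'))
      = lact ?T (ser_part a * ser_part b) (mod_part V')"
    by (subst mult.commute) (rule lact_mult[OF vanish(2), symmetric])
  moreover have "lact ?T (ser_part a) (ract ?T (ser_part V) (mod_part b))
      = ract ?T (ser_part a * ser_part V) (mod_part b)"
    by (rule lact_ract_eq_ract_mult[OF mod_part_in_shift_module[OF assms(2)] X_dvd_V])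
  moreover have "lact ?T (ser_part b) (ract ?T (ser_part V) (mod_part a))
      = ract ?T (ser_part b * ser_part V) (mod_part a)"
    by (rule lact_ract_eq_ract_mult[OF mod_part_in_shift_module[OF assms(1)] X_dvd_V])
  ultimately have mod_eq: "mod_part (null_ext_mul N a (null_ext_mul N b V))
      = mod_part (null_ext_mul N b (null_ext_mul N a V'))"
    by (simp add: ser_V' lact_add_fun swap add_ac)
  have "ser_part (null_ext_mul N a (null_ext_mul N b V))
      = ser_part (null_ext_mul N b (null_ext_mul N a V'))"
    by (simp add: ser_V' mult.left_commute)
  then have "null_ext_mul N a (null_ext_mul N b V) = null_ext_mul N b (null_ext_mul N a V')"
    using mod_eq by (rule parts_eqI)
  then show ?thesis
    by (simp add: V_def V'_def lprod_Cons)
qed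

lemma null_ext_satisfies_sigma_identity:
  assumes "4 \<le> n"
  shows "satisfies_identity (null_ext_carrier (n - 2)) (null_ext_mul (n - 2)) n (sigma_perm n)"
  unfolding satisfies_sigma_identity_iff[OF assms]
  using assms by (intro ballI allI impI null_ext_sigma_swap) auto

lemma lprod_X_replicate_X:
  "lprod (null_ext_mul N) (pack fps_X (\<lambda>a b. 0) # replicate q (pack fps_X (\<lambda>a b. 0)))
    = pack (fps_X ^ Suc q) (\<lambda>a b. 0 :: 'k::comm_ring_1)"
proof (induction q)
  case (Suc q)
  then have "lprod (null_ext_mul N) (pack fps_X (\<lambda>a b. 0) # replicate (Suc q) (pack fps_X (\<lambda>a b. 0)))
      = null_ext_mul N (pack fps_X (\<lambda>a b. 0)) (pack (fps_X ^ Suc q) (\<lambda>a b. 0 :: 'k))"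
    by simp
  also have "\<dots> = pack (fps_X ^ Suc (Suc q)) (\<lambda>a b. 0)"
    by (rule parts_eqI) simp_all
  finally show ?case .
qed simp

lemma mod_part_lprod_word:
  fixes \<phi> :: "nat \<Rightarrow> nat \<Rightarrow> 'k::comm_ring_1"
  assumes "p \<le> 2 * N" "q \<le> 2 * N"
  shows "mod_part (lprod (null_ext_mul N) (replicate p (pack fps_X (\<lambda>a b. 0)) @ pack 0 \<phi>
      # replicate q (pack fps_X (\<lambda>a b. 0)))) a b = \<phi> (a + p) (b + q)"
  using assms(1)
proof (induction p arbitrary: a)
  case 0
  show ?case
  proof (cases q)
    case (Suc q')
    then show ?thesis
      using ract_X_power[of q "2 * N" \<phi> a b] assms(2) by (simp add: lprod_Cons lprod_X_replicate_X)
  qed simp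
next
  case (Suc p)
  then show ?case
    by (simp add: lprod_Cons lact_fps_X)
qed

text \<open>With X = (X, 0) and \<phi> = (0, \<phi>), the words X^(a0+1) \<phi> X^b0 and X^a0 \<phi> X^(b0+1) have
  module coordinates \<phi>(a0+1, b0) = 0 and \<phi>(a0, b0+1) = 1 at (0, 0).  Such a \<phi> lies in the
  module because a0, b0 < N, where the two actions of X need not agree.\<close>

lemma null_ext_transposition_identity_fails:
  assumes "a0 < N" "b0 < N"
  shows "\<not> satisfies_identity (null_ext_carrier N :: (nat \<Rightarrow> 'k::comm_ring_1) set) (null_ext_mul N)
    (a0 + b0 + 2) (transpose (a0 + 1) (a0 + 2))"
proof
  let ?k = "a0 + b0 + 2"
  let ?\<tau> = "transpose (a0 + 1) (a0 + 2)"
  let ?P = "lprod (null_ext_mul N)"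
  define X :: "nat \<Rightarrow> 'k" where "X = pack fps_X (\<lambda>a b. 0)"
  define \<phi> :: "nat \<Rightarrow> nat \<Rightarrow> 'k" where "\<phi> a b = (if a \<le> a0 \<and> a + b = a0 + b0 + 1 then 1 else 0)" for a b
  define x where "x i = (if i = a0 + 2 then pack 0 \<phi> else X)" for i
  assume sat: "satisfies_identity (null_ext_carrier N :: (nat \<Rightarrow> 'k) set) (null_ext_mul N) ?k ?\<tau>"
  have "\<phi> \<in> shift_module N (2 * N)"
    using assms by (auto simp: shift_module_def vanishes_beyond_def \<phi>_def)
  then have "\<forall>i\<in>{1..?k}. x i \<in> null_ext_carrier N"
    by (simp add: x_def X_def null_ext_carrier_def shift_module_zero)
  then have "?P (map x [1..<?k+1]) = ?P (map (\<lambda>i. x (?\<tau> i)) [1..<?k+1])"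
    by (rule sat[unfolded satisfies_identity_def, THEN spec, THEN mp])
  moreover have "map x [1..<?k+1] = replicate (a0 + 1) X @ pack 0 \<phi> # replicate b0 X"
    by (rule nth_equalityI) (auto simp: x_def nth_append nth_Cons' simp del: upt.simps)
  moreover have "map (\<lambda>i. x (?\<tau> i)) [1..<?k+1] = replicate a0 X @ pack 0 \<phi> # replicate (b0 + 1) X"
    by (rule nth_equalityI) (auto simp: x_def nth_append nth_Cons' transpose_def simp del: upt.simps)
  ultimately have "mod_part (?P (replicate (a0 + 1) X @ pack 0 \<phi> # replicate b0 X)) 0 0
      = mod_part (?P (replicate a0 X @ pack 0 \<phi> # replicate (b0 + 1) X)) 0 0"
    by (simp only:)
  then have "\<phi> (a0 + 1) b0 = \<phi> a0 (b0 + 1)"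
    unfolding X_def using assms by (subst (asm) (1 2) mod_part_lprod_word) simp_all
  then show False
    by (simp add: \<phi>_def)
qed

lemma null_ext_not_eventually_commutative:
  assumes "2 \<le> k" "k \<le> 2 * N"
  shows "\<not> eventually_commutative (null_ext_carrier N :: (nat \<Rightarrow> 'k::comm_ring_1) set) (null_ext_mul N) k"
proof
  define a0 where "a0 = min (k - 2) (N - 1)"
  define b0 where "b0 = k - 2 - a0"
  have ab: "a0 < N" "b0 < N" and k: "k = a0 + b0 + 2"
    using assms unfolding a0_def b0_def by auto
  have "transpose (a0 + 1) (a0 + 2) permutes {1..k}"
    using k by (intro permutes_swap_id) auto
  moreover assume "eventually_commutative (null_ext_carrier N :: (nat \<Rightarrow> 'k) set) (null_ext_mul N) k"
  ultimately have "satisfies_identity (null_ext_carrier N :: (nat \<Rightarrow> 'k) set) (null_ext_mul N)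
      (a0 + b0 + 2) (transpose (a0 + 1) (a0 + 2))"
    unfolding eventually_commutative_def k by blast
  then show False
    using null_ext_transposition_identity_fails[OF ab] by contradiction
qed

theorem theorem2p17:
  fixes n :: nat
  assumes "n \<ge> 4"
  shows "(\<forall>(A :: 'a set) add zero (sc :: 'k::field \<Rightarrow> 'a \<Rightarrow> 'a) mul.
            is_assoc_algebra A add zero sc mul \<and> satisfies_identity A mul n (sigma_perm n)
            \<longrightarrow> eventually_commutative A mul (2 * n - 3))
       \<and> (\<exists>(A :: (nat \<Rightarrow> 'k) set) add zero (sc :: 'k \<Rightarrow> (nat \<Rightarrow> 'k) \<Rightarrow> (nat \<Rightarrow> 'k)) mul.
            is_assoc_algebra A add zero sc mul \<and> satisfies_identity A mul n (sigma_perm n) \<and>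
            (\<forall>k. 2 \<le> k \<and> k < 2 * n - 3 \<longrightarrow> \<not> eventually_commutative A mul k))"
proof (intro conjI allI impI)
  fix A :: "'a set" and add zero and sc :: "'k \<Rightarrow> 'a \<Rightarrow> 'a" and mul
  assume "is_assoc_algebra A add zero sc mul \<and> satisfies_identity A mul n (sigma_perm n)"
  then have "sigma_semigroup A mul n"
    using sigma_semigroupI[of A add zero sc mul n] assms by blast
  then show "eventually_commutative A mul (2 * n - 3)"
    by (rule sigma_semigroup.eventually_commutative)
next
  let ?A = "null_ext_carrier (n - 2) :: (nat \<Rightarrow> 'k) set" and ?mul = "null_ext_mul (n - 2)"
  have "is_assoc_algebra ?A (\<lambda>e e' i. e i + e' i) (\<lambda>i. 0) (\<lambda>c e i. c * e i) ?mul"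
    by (rule null_ext_is_assoc_algebra)
  moreover have "satisfies_identity ?A ?mul n (sigma_perm n)"
    by (rule null_ext_satisfies_sigma_identity[OF assms])
  moreover have "\<forall>k. 2 \<le> k \<and> k < 2 * n - 3 \<longrightarrow> \<not> eventually_commutative ?A ?mul k"
    by (intro allI impI null_ext_not_eventually_commutative) auto
  ultimately show "\<exists>(A :: (nat \<Rightarrow> 'k) set) add zero (sc :: 'k \<Rightarrow> (nat \<Rightarrow> 'k) \<Rightarrow> (nat \<Rightarrow> 'k)) mul.
      is_assoc_algebra A add zero sc mul \<and> satisfies_identity A mul n (sigma_perm n) \<and>
      (\<forall>k. 2 \<le> k \<and> k < 2 * n - 3 \<longrightarrow> \<not> eventually_commutative A mul k)"
    by (intro exI conjI)
qed

end
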